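(* For any positive integer $k$, in $\mathfrak{h}^1_t[[u]]$, $$S_t\left(\frac{1}{1-z_ku}\right)\ast S_{1-t}\left(\frac{1}{1+z_ku}\right)=1$$ and $$S_{1-2t}\left(\frac{1}{1-z_ku}\right)\ast_t\frac{1}{1+z_ku}=1.$$
   Context: $t,u$ are commuting variables. $\mathfrak{h}_t=\mathbb{Q}[t]\langle x,y\rangle$ ($1$ = empty word), $\mathfrak{h}^1_t=\mathbb{Q}[t]+\mathfrak{h}_ty$, $z_k=x^{k-1}y$, and $\frac1{1\mp z_ku}=\sum_n(\pm1)^nz_k^nu^n$ (concatenation powers). For a parameter $s\in\mathbb{Q}[t]$, $\sigma_s$ is the algebra automorphism of $\mathfrak{h}_t$ with $\sigma_s(x)=x,\sigma_s(y)=sx+y$ and $S_s$ is the $\mathbb{Q}[t]$-linear map with $S_s(1)=1$, $S_s(wa)=\sigma_s(w)a$ for words $w$, letters $a$. For a word $w$, $\delta(w)=1$ if $w=1$, else $0$. The harmonic product $\ast$ on $\mathfrak{h}^1_t$ is the $\mathbb{Q}[t]$-bilinear product with $1\ast w=w\ast1=w$ and $z_kw_1\ast z_lw_2=z_k(w_1\ast z_lw_2)+z_l(z_kw_1\ast w_2)+z_{k+l}(w_1\ast w_2)$; the $t$-harmonic product $\ast_t$ is the $\mathbb{Q}[t]$-bilinear product with $1\ast_t w=w\ast_t1=w$ and $z_kw_1\ast_t z_lw_2=z_k(w_1\ast_t z_lw_2)+z_l(z_kw_1\ast_t w_2)+(1-2t)z_{k+l}(w_1\ast_t w_2)+[1-\delta(w_1)\delta(w_2)](t^2-t)x^{k+l}(w_1\ast_t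 w_2)$ (for words $w_1,w_2\in\mathfrak{h}^1_t$, $k,l\ge1$). Everything extends coefficientwise to power series in $u$. *)

theory Defs
  imports "HOL-Library.Poly_Mapping" "HOL-Computational_Algebra.Polynomial"
begin

datatype letter = X | Y

type_synonym word = "letter list"

text \<open>Elements of h_t: finitely supported Q[t]-linear combinations of words
  (the empty word is 1).  Coefficient ring Q[t] = rat poly.\<close>
type_synonym hpoly = "word \<Rightarrow>\<^sub>0 rat poly"

text \<open>Elements of h_t[[u]]: coefficient sequences (coefficient of u^n).\<close>
type_synonym hser = "nat \<Rightarrow> hpoly"

definition tvar :: "rat poly" where "tvar = [:0, 1:]"

definition hsmult :: "rat poly \<Rightarrow> hpoly \<Rightarrow> hpoly" where
  "hsmult c f = Poly_Mapping.map (\<lambda>a. c * a) f"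

definition bilin :: "(word \<Rightarrow> word \<Rightarrow> hpoly) \<Rightarrow> hpoly \<Rightarrow> hpoly \<Rightarrow> hpoly" where
  "bilin op f g = (\<Sum>w1\<in>Poly_Mapping.keys f. \<Sum>w2\<in>Poly_Mapping.keys g.
      hsmult (Poly_Mapping.lookup f w1 * Poly_Mapping.lookup g w2) (op w1 w2))"

definition linext :: "(word \<Rightarrow> hpoly) \<Rightarrow> hpoly \<Rightarrow> hpoly" where
  "linext \<phi> f = (\<Sum>w\<in>Poly_Mapping.keys f. hsmult (Poly_Mapping.lookup f w) (\<phi> w))"

definition wd :: "word \<Rightarrow> hpoly" where "wd w = Poly_Mapping.single w 1"

definition cat :: "hpoly \<Rightarrow> hpoly \<Rightarrow> hpoly" where
  "cat = bilin (\<lambda>w1 w2. wd (w1 @ w2))"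

definition pre :: "word \<Rightarrow> hpoly \<Rightarrow> hpoly" where
  "pre p f = cat (wd p) f"

definition z :: "nat \<Rightarrow> word" where
  "z k = replicate (k - 1) X @ [Y]"

definition sigma_letter :: "rat poly \<Rightarrow> letter \<Rightarrow> hpoly" where
  "sigma_letter s a = (case a of X \<Rightarrow> wd [X] | Y \<Rightarrow> hsmult s (wd [X]) + wd [Y])"

fun sigma_word :: "rat poly \<Rightarrow> word \<Rightarrow> hpoly" where
  "sigma_word s [] = wd []"
| "sigma_word s (a # w) = cat (sigma_letter s a) (sigma_word s w)"

definition sigma :: "rat poly \<Rightarrow> hpoly \<Rightarrow> hpoly" where
  "sigma s = linext (sigma_word s)"

definition S_word :: "rat poly \<Rightarrow> word \<Rightarrow> hpoly" where
  "S_word s w = (if w = [] then wd [] else cat (sigma_word s (butlast w)) (wd [last w]))"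

definition S :: "rat poly \<Rightarrow> hpoly \<Rightarrow> hpoly" where
  "S s = linext (S_word s)"

text \<open>A word of h^1 (ending in y, or empty) is z_{k_1}...z_{k_r}; we recover the
  index list (k_1,...,k_r), all k_i \<ge> 1.\<close>
fun dec :: "nat \<Rightarrow> word \<Rightarrow> nat list" where
  "dec i [] = []"
| "dec i (X # w) = dec (Suc i) w"
| "dec i (Y # w) = Suc i # dec 0 w"

definition enc :: "nat list \<Rightarrow> word" where
  "enc ks = concat (map z ks)"

fun harm :: "nat list \<Rightarrow> nat list \<Rightarrow> hpoly" where
  "harm [] b = wd (enc b)"
| "harm a [] = wd (enc a)"
| "harm (k # a) (l # b) =
     pre (z k) (harm a (l # b)) + pre (z l) (harm (k # a) b) + pre (z (k + l)) (harm a b)"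

fun tharm :: "nat list \<Rightarrow> nat list \<Rightarrow> hpoly" where
  "tharm [] b = wd (enc b)"
| "tharm a [] = wd (enc a)"
| "tharm (k # a) (l # b) =
     pre (z k) (tharm a (l # b)) + pre (z l) (tharm (k # a) b)
     + hsmult (1 - 2 * tvar) (pre (z (k + l)) (tharm a b))
     + hsmult (if a = [] \<and> b = [] then 0 else 1)
         (hsmult (tvar ^ 2 - tvar) (pre (replicate (k + l) X) (tharm a b)))"

definition hprod :: "hpoly \<Rightarrow> hpoly \<Rightarrow> hpoly" where
  "hprod = bilin (\<lambda>w1 w2. harm (dec 0 w1) (dec 0 w2))"

definition thprod :: "hpoly \<Rightarrow> hpoly \<Rightarrow> hpoly" where
  "thprod = bilin (\<lambda>w1 w2. tharm (dec 0 w1) (dec 0 w2))"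

definition ser_mult :: "(hpoly \<Rightarrow> hpoly \<Rightarrow> hpoly) \<Rightarrow> hser \<Rightarrow> hser \<Rightarrow> hser" where
  "ser_mult m F G = (\<lambda>n. \<Sum>i\<le>n. m (F i) (G (n - i)))"

definition ser_map :: "(hpoly \<Rightarrow> hpoly) \<Rightarrow> hser \<Rightarrow> hser" where
  "ser_map \<phi> F = (\<lambda>n. \<phi> (F n))"

definition ser_one :: hser where
  "ser_one = (\<lambda>n. if n = 0 then wd [] else 0)"

text \<open>1/(1 - c z_k u) = sum_n c^n z_k^n u^n, for c = 1 or c = -1.\<close>
definition geom :: "rat poly \<Rightarrow> nat \<Rightarrow> hser" where
  "geom c k = (\<lambda>n. hsmult (c ^ n) (wd (concat (replicate n (z k)))))"

end

theory Submission
  imports Defs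
begin

(* Put F = S_s(1/(1 - z_k u)). Since S_s(z_k^(n+1)) = sigma_s(z_k) S_s(z_k^n) and
   sigma_s(z_k) = s x^k + z_k, the series satisfies F = 1 + L F with L = sum_(c>=1) s^(c-1) z_(ck) u^c;
   likewise G = S_s'(1/(1 + z_k u)) satisfies G = 1 + M G.  For a product with the quasi-shuffle
   recursion z_a f * z_b g = z_a (f * z_b g) + z_b (z_a f * g) + z_(a+b) (f * g), expanding
   (1 + L F) * (1 + M G) gives F * G = 1 + (L + M + L.M) (F * G), where L.M multiplies coefficients
   and adds indices.  For the harmonic product the coefficient series lambda(u) = u/(1 - t u) and
   mu(u) = -u/(1 + (1-t) u) satisfy (1 + lambda)(1 + mu) = 1, so the bracket vanishes.  For the
   t-harmonic product the z_(a+b) term carries the factor 1 - 2t, which cancels with lambda(u) =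
   u/(1 - (1-2t) u) and mu(u) = -u, and the additional term (t^2 - t) x^(a+b) (...) only involves
   F *_t G - 1 in lower degrees, so induction on the degree finishes the proof. *)

section \<open>Linear and bilinear maps on h_t\<close>

lemma lookup_hsmult [simp]: "Poly_Mapping.lookup (hsmult c f) w = c * Poly_Mapping.lookup f w"
  unfolding hsmult_def by transfer (simp add: when_def)

lemma hsmult_add: "hsmult c (f + g) = hsmult c f + hsmult c g"
  by (rule poly_mapping_eqI) (simp add: lookup_add algebra_simps)

lemma hsmult_add_left: "hsmult (c + d) f = hsmult c f + hsmult d f"
  by (rule poly_mapping_eqI) (simp add: lookup_add algebra_simps)

lemma hsmult_mult: "hsmult c (hsmult d f) = hsmult (c * d) f"
  by (rule poly_mapping_eqI) (simp add: algebra_simps)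

lemma hsmult_one [simp]: "hsmult 1 f = f"
  by (rule poly_mapping_eqI) simp

lemma hsmult_zero [simp]: "hsmult 0 f = 0"
  by (rule poly_mapping_eqI) simp

lemma hsmult_zero_right [simp]: "hsmult c 0 = 0"
  by (rule poly_mapping_eqI) simp

lemma hsmult_diff: "hsmult c (f - g) = hsmult c f - hsmult c g"
  by (rule poly_mapping_eqI) (simp add: lookup_minus algebra_simps)

lemma hsmult_sum: "hsmult c (sum f A) = (\<Sum>x\<in>A. hsmult c (f x))"
  by (rule poly_mapping_eqI) (simp add: lookup_sum sum_distrib_left)

lemma hsmult_sum_left: "hsmult (sum f A) g = (\<Sum>x\<in>A. hsmult (f x) g)"
  by (rule poly_mapping_eqI) (simp add: lookup_sum sum_distrib_right)

lemma lookup_wd: "Poly_Mapping.lookup (wd w) v = (if w = v then 1 else 0)"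
  by (simp add: wd_def lookup_single when_def)

lemma keys_wd [simp]: "Poly_Mapping.keys (wd w) = {w}"
  by (simp add: wd_def)

lemma keys_hsmult: "Poly_Mapping.keys (hsmult c f) \<subseteq> Poly_Mapping.keys f"
  by (auto simp: in_keys_iff)

lemma hpoly_expand: "f = (\<Sum>w\<in>Poly_Mapping.keys f. hsmult (Poly_Mapping.lookup f w) (wd w))"
  by (rule poly_mapping_eqI)
    (simp add: lookup_sum lookup_wd if_distrib[of "(*) _"] in_keys_iff cong: if_cong)

definition hlinear :: "(hpoly \<Rightarrow> hpoly) \<Rightarrow> bool" where
  "hlinear L \<longleftrightarrow> (\<forall>f g. L (f + g) = L f + L g) \<and> (\<forall>c f. L (hsmult c f) = hsmult c (L f))"

definition hbilinear :: "(hpoly \<Rightarrow> hpoly \<Rightarrow> hpoly) \<Rightarrow> bool" where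
  "hbilinear P \<longleftrightarrow> (\<forall>g. hlinear (\<lambda>f. P f g)) \<and> (\<forall>f. hlinear (P f))"

lemma hlinear_add: "hlinear L \<Longrightarrow> L (f + g) = L f + L g"
  and hlinear_hsmult: "hlinear L \<Longrightarrow> L (hsmult c f) = hsmult c (L f)"
  by (auto simp: hlinear_def)

lemma hlinear_zero: "hlinear L \<Longrightarrow> L 0 = 0"
  by (metis hsmult_zero hlinear_hsmult)

lemma hlinear_sum: "hlinear L \<Longrightarrow> L (sum f A) = (\<Sum>x\<in>A. L (f x))"
  by (induction A rule: infinite_finite_induct) (auto simp: hlinear_zero hlinear_add)

lemma hlinear_diff: "hlinear L \<Longrightarrow> L (f - g) = L f - L g"
  by (metis add_diff_cancel diff_add_cancel hlinear_add)

lemma hlinear_eq_on_keys: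
  assumes "hlinear L" "hlinear M" "\<And>w. w \<in> Poly_Mapping.keys f \<Longrightarrow> L (wd w) = M (wd w)"
  shows "L f = M f"
proof -
  have "L f = (\<Sum>w\<in>Poly_Mapping.keys f. hsmult (Poly_Mapping.lookup f w) (L (wd w)))"
    if "hlinear L" for L
    by (subst hpoly_expand) (simp add: that hlinear_sum hlinear_hsmult)
  with assms show ?thesis
    by (metis (no_types, lifting) sum.cong)
qed

lemma hbilinearI: "(\<And>g. hlinear (\<lambda>f. P f g)) \<Longrightarrow> (\<And>f. hlinear (P f)) \<Longrightarrow> hbilinear P"
  by (simp add: hbilinear_def)

lemma hbilinear_eq_on_keys:
  assumes "hbilinear P" "hbilinear Q"
    and "\<And>w1 w2. w1 \<in> Poly_Mapping.keys f \<Longrightarrow> w2 \<in> Poly_Mapping.keys g \<Longrightarrow>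
           P (wd w1) (wd w2) = Q (wd w1) (wd w2)"
  shows "P f g = Q f g"
proof (rule hlinear_eq_on_keys[where L = "\<lambda>f. P f g" and M = "\<lambda>f. Q f g"])
  fix w1
  assume "w1 \<in> Poly_Mapping.keys f"
  show "P (wd w1) g = Q (wd w1) g"
    by (rule hlinear_eq_on_keys[where L = "P (wd w1)" and M = "Q (wd w1)"])
      (use assms \<open>w1 \<in> _\<close> in \<open>auto simp: hbilinear_def\<close>)
qed (use assms in \<open>auto simp: hbilinear_def\<close>)

named_theorems hlinear_intros

lemma hlinear_id [hlinear_intros]: "hlinear (\<lambda>f. f)"
  by (simp add: hlinear_def)

lemma hlinear_add_fun [hlinear_intros]: "hlinear L \<Longrightarrow> hlinear M \<Longrightarrow> hlinear (\<lambda>f. L f + M f)"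
  by (simp add: hlinear_def hsmult_add)

lemma hlinear_hsmult_fun [hlinear_intros]: "hlinear L \<Longrightarrow> hlinear (\<lambda>f. hsmult c (L f))"
  by (simp add: hlinear_def hsmult_add hsmult_mult mult.commute)

lemma hlinear_sum_fun: "(\<And>x. x \<in> A \<Longrightarrow> hlinear (L x)) \<Longrightarrow> hlinear (\<lambda>f. \<Sum>x\<in>A. L x f)"
  by (simp add: hlinear_def sum.distrib hsmult_sum)

lemma hbilinear_sum_left: "hbilinear P \<Longrightarrow> P (sum F A) g = (\<Sum>x\<in>A. P (F x) g)"
  and hbilinear_sum_right: "hbilinear P \<Longrightarrow> P f (sum G A) = (\<Sum>x\<in>A. P f (G x))"
  and hbilinear_hsmult_left: "hbilinear P \<Longrightarrow> P (hsmult c f) g = hsmult c (P f g)"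
  and hbilinear_hsmult_right: "hbilinear P \<Longrightarrow> P f (hsmult c g) = hsmult c (P f g)"
  and hbilinear_add_left: "hbilinear P \<Longrightarrow> P (f + f') g = P f g + P f' g"
  and hbilinear_add_right: "hbilinear P \<Longrightarrow> P f (g + g') = P f g + P f g'"
  and hbilinear_diff_left: "hbilinear P \<Longrightarrow> P (f - f') g = P f g - P f' g"
  and hbilinear_diff_right: "hbilinear P \<Longrightarrow> P f (g - g') = P f g - P f g'"
  and hbilinear_zero_left: "hbilinear P \<Longrightarrow> P 0 g = 0"
  and hbilinear_zero_right: "hbilinear P \<Longrightarrow> P f 0 = 0"
  unfolding hbilinear_def
  by (simp_all add: hlinear_sum[of "\<lambda>f. P f g"] hlinear_sum[of "P f"]
      hlinear_hsmult[of "\<lambda>f. P f g"] hlinear_hsmult[of "P f"]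
      hlinear_add[of "\<lambda>f. P f g"] hlinear_add[of "P f"]
      hlinear_diff[of "\<lambda>f. P f g"] hlinear_diff[of "P f"]
      hlinear_zero[of "\<lambda>f. P f g"] hlinear_zero[of "P f"])

lemmas hbilinear_simps = hbilinear_sum_left hbilinear_sum_right hbilinear_hsmult_left
  hbilinear_hsmult_right hbilinear_add_left hbilinear_add_right hbilinear_diff_left
  hbilinear_diff_right hbilinear_zero_left hbilinear_zero_right

lemma hlinear_hbilinear_comp_left: "hbilinear P \<Longrightarrow> hlinear L \<Longrightarrow> hlinear (\<lambda>f. P (L f) g)"
  and hlinear_hbilinear_comp_right: "hbilinear P \<Longrightarrow> hlinear L \<Longrightarrow> hlinear (\<lambda>g. P f (L g))"
  by (simp_all add: hbilinear_def hlinear_def)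

lemma linext_eq_superset:
  "finite A \<Longrightarrow> Poly_Mapping.keys f \<subseteq> A \<Longrightarrow>
   linext \<phi> f = (\<Sum>w\<in>A. hsmult (Poly_Mapping.lookup f w) (\<phi> w))"
  unfolding linext_def by (rule sum.mono_neutral_left) (auto simp: in_keys_iff)

lemma hlinear_linext [hlinear_intros]: "hlinear (linext \<phi>)"
  unfolding hlinear_def
proof safe
  fix f g :: hpoly
  let ?A = "Poly_Mapping.keys f \<union> Poly_Mapping.keys g"
  have "linext \<phi> (f + g) = (\<Sum>w\<in>?A. hsmult (Poly_Mapping.lookup (f + g) w) (\<phi> w))"
    by (rule linext_eq_superset) (simp_all add: keys_add)
  then show "linext \<phi> (f + g) = linext \<phi> f + linext \<phi> g"
    by (simp add: linext_eq_superset[of ?A] lookup_add hsmult_add_left sum.distrib)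
next
  fix c and f :: hpoly
  have "linext \<phi> (hsmult c f) =
      (\<Sum>w\<in>Poly_Mapping.keys f. hsmult (Poly_Mapping.lookup (hsmult c f) w) (\<phi> w))"
    by (rule linext_eq_superset) (simp_all add: keys_hsmult)
  then show "linext \<phi> (hsmult c f) = hsmult c (linext \<phi> f)"
    by (simp add: linext_def hsmult_sum hsmult_mult)
qed

lemma linext_wd [simp]: "linext \<phi> (wd w) = \<phi> w"
  by (simp add: linext_def lookup_wd)

lemma bilin_eq_linext: "bilin op f g = linext (\<lambda>w1. linext (op w1) g) f"
  by (simp add: bilin_def linext_def hsmult_sum hsmult_mult)

lemma hbilinear_bilin [hlinear_intros]: "hbilinear (bilin op)"
  unfolding hbilinear_def
proof safe
  fix f g
  show "hlinear (\<lambda>f. bilin op f g)"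
    unfolding bilin_eq_linext by (rule hlinear_linext)
  show "hlinear (bilin op f)"
    unfolding bilin_eq_linext linext_def[of "\<lambda>w1. linext (op w1) _"]
    by (intro hlinear_sum_fun hlinear_intros)
qed

lemma bilin_wd [simp]: "bilin op (wd w1) (wd w2) = op w1 w2"
  by (simp add: bilin_eq_linext)

lemma hbilinear_cat [hlinear_intros]: "hbilinear cat"
  unfolding cat_def by (rule hbilinear_bilin)

lemmas hlinear_cat_left [hlinear_intros] = hlinear_hbilinear_comp_left[OF hbilinear_cat]
  and hlinear_cat_right [hlinear_intros] = hlinear_hbilinear_comp_right[OF hbilinear_cat]

lemma cat_wd [simp]: "cat (wd u) (wd v) = wd (u @ v)"
  by (simp add: cat_def)

lemma cat_assoc: "cat (cat f g) h = cat f (cat g h)"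
proof (rule hbilinear_eq_on_keys[where P = "\<lambda>f g. cat (cat f g) h" and Q = "\<lambda>f g. cat f (cat g h)"])
  fix u v
  show "cat (cat (wd u) (wd v)) h = cat (wd u) (cat (wd v) h)"
    by (rule hlinear_eq_on_keys[where L = "cat (cat (wd u) (wd v))" and M = "\<lambda>h. cat (wd u) (cat (wd v) h)"])
      (auto intro!: hlinear_intros)
qed (auto simp: hbilinear_def intro!: hlinear_intros)

lemma cat_Nil_left [simp]: "cat (wd []) f = f"
  by (rule hlinear_eq_on_keys[where L = "cat (wd [])"]) (auto intro!: hlinear_intros)

lemma cat_Nil_right [simp]: "cat f (wd []) = f"
  by (rule hlinear_eq_on_keys[where L = "\<lambda>f. cat f (wd [])"]) (auto intro!: hlinear_intros)

lemma cat_add_left: "cat (f + g) h = cat f h + cat g h"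
  and cat_hsmult_left: "cat (hsmult c f) h = hsmult c (cat f h)"
  using hbilinear_cat by (auto simp: hbilinear_def hlinear_def)

lemma hlinear_pre [hlinear_intros]: "hlinear L \<Longrightarrow> hlinear (\<lambda>f. pre p (L f))"
  unfolding pre_def by (rule hlinear_cat_right)

lemma pre_wd [simp]: "pre p (wd w) = wd (p @ w)"
  by (simp add: pre_def)

lemma pre_pre: "pre p (pre q f) = pre (p @ q) f"
  by (simp add: pre_def cat_assoc[symmetric])

lemma pre_add: "pre p (f + g) = pre p f + pre p g"
  and pre_hsmult: "pre p (hsmult c f) = hsmult c (pre p f)"
  and pre_sum: "pre p (sum F A) = (\<Sum>x\<in>A. pre p (F x))"
  and pre_diff: "pre p (f - g) = pre p f - pre p g"
  and pre_zero [simp]: "pre p 0 = 0"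
  using hlinear_pre[OF hlinear_id, of p]
  by (simp_all add: hlinear_add hlinear_hsmult hlinear_sum hlinear_diff hlinear_zero)

lemma pre_expand: "pre p f = (\<Sum>w\<in>Poly_Mapping.keys f. hsmult (Poly_Mapping.lookup f w) (wd (p @ w)))"
  by (subst hpoly_expand) (simp add: pre_sum pre_hsmult)

section \<open>sigma_s and S_s on powers of z_k\<close>

lemma sigma_word_append: "sigma_word s (u @ v) = cat (sigma_word s u) (sigma_word s v)"
  by (induction u) (auto simp: cat_assoc)

lemma sigma_word_replicate_X: "sigma_word s (replicate m X) = wd (replicate m X)"
  by (induction m) (auto simp: sigma_letter_def)

lemma sigma_word_z:
  assumes "1 \<le> k"
  shows "sigma_word s (z k) = hsmult s (wd (replicate k X)) + wd (z k)"
proof -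
  have "replicate (k - 1) X @ [X] = replicate k X"
    using assms by (metis Suc_diff_le diff_Suc_1 replicate_Suc replicate_append_same)
  then show ?thesis
    by (simp add: z_def sigma_word_append sigma_word_replicate_X sigma_letter_def
        hlinear_add[OF hlinear_cat_right[OF hlinear_id]]
        hlinear_hsmult[OF hlinear_cat_right[OF hlinear_id]])
qed

definition zpow :: "nat \<Rightarrow> nat \<Rightarrow> word" where
  "zpow k n = concat (replicate n (z k))"

lemma zpow_Suc: "zpow k (Suc n) = z k @ zpow k n"
  by (simp add: zpow_def)

lemma zpow_Suc': "zpow k (Suc n) = zpow k n @ z k"
  by (induction n) (simp_all add: zpow_def)

lemma S_word_zpow_Suc:
  assumes "1 \<le> k"
  shows "S_word s (zpow k (Suc n)) = cat (sigma_word s (zpow k n)) (wd (z k))"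
proof -
  have split: "zpow k (Suc n) = (zpow k n @ replicate (k - 1) X) @ [Y]"
    by (simp add: zpow_Suc' z_def)
  show ?thesis
    unfolding S_word_def split butlast_snoc last_snoc
    by (simp add: sigma_word_append sigma_word_replicate_X cat_assoc z_def)
qed

lemma S_word_zpow_Suc_Suc:
  assumes k: "1 \<le> k"
  shows "S_word s (zpow k (Suc (Suc n))) =
    hsmult s (pre (replicate k X) (S_word s (zpow k (Suc n)))) + pre (z k) (S_word s (zpow k (Suc n)))"
proof -
  have "S_word s (zpow k (Suc (Suc n))) = cat (sigma_word s (zpow k (Suc n))) (wd (z k))"
    by (rule S_word_zpow_Suc[OF k])
  also have "\<dots> = cat (sigma_word s (z k)) (cat (sigma_word s (zpow k n)) (wd (z k)))"
    by (simp only: zpow_Suc sigma_word_append cat_assoc)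
  also have "\<dots> = cat (sigma_word s (z k)) (S_word s (zpow k (Suc n)))"
    by (simp only: S_word_zpow_Suc[OF k])
  finally show ?thesis
    by (simp add: sigma_word_z[OF k] cat_add_left cat_hsmult_left pre_def)
qed

section \<open>The harmonic products on h^1_t\<close>

lemma dec_replicate_X: "dec i (replicate m X @ Y # w) = Suc (i + m) # dec 0 w"
  by (induction m arbitrary: i) auto

lemma dec_z: "1 \<le> a \<Longrightarrow> dec 0 (z a @ w) = a # dec 0 w"
  by (simp add: z_def dec_replicate_X)

lemma enc_Nil [simp]: "enc [] = []"
  and enc_Cons [simp]: "enc (a # ks) = z a @ enc ks"
  by (simp_all add: enc_def)

(* w is a word of h^1, i.e. a product z_(k1) ... z_(kr) *)
definition h1w :: "word \<Rightarrow> bool" where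
  "h1w w \<longleftrightarrow> enc (dec 0 w) = w"

definition h1 :: "hpoly \<Rightarrow> bool" where
  "h1 f \<longleftrightarrow> (\<forall>w\<in>Poly_Mapping.keys f. h1w w)"

lemma h1_add: "h1 f \<Longrightarrow> h1 g \<Longrightarrow> h1 (f + g)"
  unfolding h1_def by (auto dest: set_mp[OF keys_add])

lemma h1_hsmult: "h1 f \<Longrightarrow> h1 (hsmult c f)"
  unfolding h1_def by (auto dest: set_mp[OF keys_hsmult])

lemma h1_diff: "h1 f \<Longrightarrow> h1 g \<Longrightarrow> h1 (f - g)"
  unfolding h1_def by (auto dest: set_mp[OF keys_diff])

lemma h1_zero [simp]: "h1 0"
  by (simp add: h1_def)

lemma h1_sum: "(\<And>x. x \<in> A \<Longrightarrow> h1 (f x)) \<Longrightarrow> h1 (sum f A)"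
  by (induction A rule: infinite_finite_induct) (auto intro: h1_add)

lemma h1_wd: "h1w w \<Longrightarrow> h1 (wd w)"
  by (simp add: h1_def)

lemma h1_pre_z: "1 \<le> a \<Longrightarrow> h1 f \<Longrightarrow> h1 (pre (z a) f)"
  unfolding pre_expand
  by (intro h1_sum h1_hsmult h1_wd) (auto simp: h1_def h1w_def dec_z)

lemma lookup_pre_Nil: "p \<noteq> [] \<Longrightarrow> Poly_Mapping.lookup (pre p f) [] = 0"
  unfolding pre_expand by (simp add: lookup_sum lookup_wd)

lemma hbilinear_hprod: "hbilinear hprod"
  and hbilinear_thprod: "hbilinear thprod"
  unfolding hprod_def thprod_def by (rule hbilinear_bilin)+

lemmas hlinear_hprod_left [hlinear_intros] = hlinear_hbilinear_comp_left[OF hbilinear_hprod]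
  and hlinear_hprod_right [hlinear_intros] = hlinear_hbilinear_comp_right[OF hbilinear_hprod]
  and hlinear_thprod_left [hlinear_intros] = hlinear_hbilinear_comp_left[OF hbilinear_thprod]
  and hlinear_thprod_right [hlinear_intros] = hlinear_hbilinear_comp_right[OF hbilinear_thprod]

lemma hprod_wd: "hprod (wd u) (wd v) = harm (dec 0 u) (dec 0 v)"
  and thprod_wd: "thprod (wd u) (wd v) = tharm (dec 0 u) (dec 0 v)"
  by (simp_all add: hprod_def thprod_def)

lemma harm_Nil_right [simp]: "harm a [] = wd (enc a)"
  and tharm_Nil_right [simp]: "tharm a [] = wd (enc a)"
  by (cases a; simp)+

lemma bilin_dec_unit:
  assumes "\<And>b. op [] b = wd (enc b)" and "\<And>a. op a [] = wd (enc a)" and "h1 f"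
  shows "bilin (\<lambda>u v. op (dec 0 u) (dec 0 v)) (wd []) f = f"
    and "bilin (\<lambda>u v. op (dec 0 u) (dec 0 v)) f (wd []) = f"
proof -
  have enc_dec: "enc (dec 0 w) = w" if "w \<in> Poly_Mapping.keys f" for w
    using assms(3) that by (simp add: h1_def h1w_def)
  show "bilin (\<lambda>u v. op (dec 0 u) (dec 0 v)) (wd []) f = f"
    by (rule hlinear_eq_on_keys[OF hlinear_hbilinear_comp_right[OF hbilinear_bilin hlinear_id] hlinear_id])
      (simp add: assms(1) enc_dec)
  show "bilin (\<lambda>u v. op (dec 0 u) (dec 0 v)) f (wd []) = f"
    by (rule hlinear_eq_on_keys[OF hlinear_hbilinear_comp_left[OF hbilinear_bilin hlinear_id] hlinear_id])
      (simp add: assms(2) enc_dec)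
qed

lemmas hprod_unit = bilin_dec_unit[of harm, OF harm.simps(1) harm_Nil_right, folded hprod_def]
  and thprod_unit = bilin_dec_unit[of tharm, OF tharm.simps(1) tharm_Nil_right, folded thprod_def]

definition quasi_shuffle_rec ::
    "(hpoly \<Rightarrow> hpoly \<Rightarrow> hpoly) \<Rightarrow> (nat \<Rightarrow> nat \<Rightarrow> hpoly \<Rightarrow> hpoly \<Rightarrow> hpoly) \<Rightarrow> bool" where
  "quasi_shuffle_rec P E \<longleftrightarrow> (\<forall>a b f g. 1 \<le> a \<longrightarrow> 1 \<le> b \<longrightarrow> h1 f \<longrightarrow> h1 g \<longrightarrow>
    P (pre (z a) f) (pre (z b) g) =
      pre (z a) (P f (pre (z b) g)) + pre (z b) (P (pre (z a) f) g) + E a b f g)"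

lemma hprod_pre_z_pre_z:
  assumes "1 \<le> a" "1 \<le> b"
  shows "hprod (pre (z a) f) (pre (z b) g) =
    pre (z a) (hprod f (pre (z b) g)) + pre (z b) (hprod (pre (z a) f) g) + pre (z (a + b)) (hprod f g)"
  by (rule hbilinear_eq_on_keys[where P = "\<lambda>f g. hprod (pre (z a) f) (pre (z b) g)"])
    (intro hbilinearI hlinear_intros | use assms in \<open>simp add: hprod_wd dec_z\<close>)+

lemma quasi_shuffle_rec_hprod: "quasi_shuffle_rec hprod (\<lambda>a b f g. pre (z (a + b)) (hprod f g))"
  unfolding quasi_shuffle_rec_def by (simp add: hprod_pre_z_pre_z)

(* The factor 1 - delta(w1) delta(w2) of the x^(k+l) term of the t-harmonic product becomes
   the subtraction of the product of the constant terms. *)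
definition thprod_reduced :: "hpoly \<Rightarrow> hpoly \<Rightarrow> hpoly" where
  "thprod_reduced f g = thprod f g - hsmult (Poly_Mapping.lookup f [] * Poly_Mapping.lookup g []) (wd [])"

lemma hbilinear_thprod_reduced: "hbilinear thprod_reduced"
  using hbilinear_thprod
  unfolding thprod_reduced_def hbilinear_def hlinear_def
  by (simp add: lookup_add hsmult_add hsmult_add_left hsmult_diff hsmult_mult algebra_simps)

lemmas hlinear_thprod_reduced_left [hlinear_intros] = hlinear_hbilinear_comp_left[OF hbilinear_thprod_reduced]
  and hlinear_thprod_reduced_right [hlinear_intros] = hlinear_hbilinear_comp_right[OF hbilinear_thprod_reduced]

lemma thprod_pre_z_pre_z_wd:
  assumes "1 \<le> a" "1 \<le> b" "h1w u" "h1w v"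
  shows "thprod (pre (z a) (wd u)) (pre (z b) (wd v)) =
    pre (z a) (thprod (wd u) (pre (z b) (wd v))) + pre (z b) (thprod (pre (z a) (wd u)) (wd v))
    + hsmult (1 - 2 * tvar) (pre (z (a + b)) (thprod (wd u) (wd v)))
    + hsmult (tvar ^ 2 - tvar) (pre (replicate (a + b) X) (thprod_reduced (wd u) (wd v)))"
proof (cases "u = [] \<and> v = []")
  case True
  with assms show ?thesis
    by (auto simp: thprod_wd dec_z[where w = "[]", simplified] thprod_reduced_def lookup_wd)
next
  case False
  with assms have "\<not> (dec 0 u = [] \<and> dec 0 v = [])"
    by (auto simp: h1w_def)
  moreover have "thprod_reduced (wd u) (wd v) = thprod (wd u) (wd v)"
    using False by (auto simp: thprod_reduced_def lookup_wd)
  ultimately show ?thesis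
    using assms by (auto simp: thprod_wd dec_z)
qed

lemma thprod_pre_z_pre_z:
  assumes "1 \<le> a" "1 \<le> b" "h1 f" "h1 g"
  shows "thprod (pre (z a) f) (pre (z b) g) =
    pre (z a) (thprod f (pre (z b) g)) + pre (z b) (thprod (pre (z a) f) g)
    + hsmult (1 - 2 * tvar) (pre (z (a + b)) (thprod f g))
    + hsmult (tvar ^ 2 - tvar) (pre (replicate (a + b) X) (thprod_reduced f g))"
proof (rule hbilinear_eq_on_keys[where P = "\<lambda>f g. thprod (pre (z a) f) (pre (z b) g)"])
  fix u v
  assume "u \<in> Poly_Mapping.keys f" "v \<in> Poly_Mapping.keys g"
  with assms show "thprod (pre (z a) (wd u)) (pre (z b) (wd v)) =
    pre (z a) (thprod (wd u) (pre (z b) (wd v))) + pre (z b) (thprod (pre (z a) (wd u)) (wd v))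
    + hsmult (1 - 2 * tvar) (pre (z (a + b)) (thprod (wd u) (wd v)))
    + hsmult (tvar ^ 2 - tvar) (pre (replicate (a + b) X) (thprod_reduced (wd u) (wd v)))"
    by (intro thprod_pre_z_pre_z_wd) (auto simp: h1_def)
qed (intro hbilinearI hlinear_intros)+

lemma quasi_shuffle_rec_thprod:
  "quasi_shuffle_rec thprod (\<lambda>a b f g. hsmult (1 - 2 * tvar) (pre (z (a + b)) (thprod f g))
     + hsmult (tvar ^ 2 - tvar) (pre (replicate (a + b) X) (thprod_reduced f g)))"
  unfolding quasi_shuffle_rec_def by (simp add: thprod_pre_z_pre_z add.assoc)

section \<open>Power series in u\<close>

(* lcat w lam k H is the concatenation product (sum_(c>=1) lam c (w (c k)) u^c) H in h_t[[u]]. *)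
definition lcat :: "(nat \<Rightarrow> word) \<Rightarrow> (nat \<Rightarrow> rat poly) \<Rightarrow> nat \<Rightarrow> hser \<Rightarrow> hser" where
  "lcat w lam k H n = (\<Sum>c\<in>{1..n}. hsmult (lam c) (pre (w (c * k)) (H (n - c))))"

definition conv :: "(nat \<Rightarrow> 'a::comm_semiring_1) \<Rightarrow> (nat \<Rightarrow> 'a) \<Rightarrow> nat \<Rightarrow> 'a" where
  "conv lam mu c = (\<Sum>a\<in>{1..c - 1}. lam a * mu (c - a))"

(* Sum over the compositions n = a + r + b + s with a, b >= 1. *)
definition comp_sum :: "nat \<Rightarrow> (nat \<Rightarrow> nat \<Rightarrow> nat \<Rightarrow> nat \<Rightarrow> 'a::comm_monoid_add) \<Rightarrow> 'a" where
  "comp_sum n \<phi> = (\<Sum>i\<le>n. \<Sum>a\<in>{1..i}. \<Sum>b\<in>{1..n - i}. \<phi> a (i - a) b (n - i - b))"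

lemma comp_sum_cong:
  "(\<And>a r b s. 1 \<le> a \<Longrightarrow> 1 \<le> b \<Longrightarrow> \<phi> a r b s = \<psi> a r b s) \<Longrightarrow> comp_sum n \<phi> = comp_sum n \<psi>"
  unfolding comp_sum_def by (intro sum.cong refl) auto

lemma comp_sum_add: "comp_sum n (\<lambda>a r b s. \<phi> a r b s + \<psi> a r b s) = comp_sum n \<phi> + comp_sum n \<psi>"
  by (simp add: comp_sum_def sum.distrib)

lemma comp_sum_reindex_left:
  "comp_sum n \<phi> = (\<Sum>a\<in>{1..n}. \<Sum>r\<le>n - a. \<Sum>b\<in>{1..n - a - r}. \<phi> a r b (n - a - r - b))"
proof -
  let ?g = "\<lambda>a r. \<Sum>b\<in>{1..n - a - r}. \<phi> a r b (n - a - r - b)"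
  have "comp_sum n \<phi> = (\<Sum>i\<le>n. \<Sum>a\<in>{1..i}. ?g a (i - a))"
    unfolding comp_sum_def by (intro sum.cong refl) (auto simp: diff_diff_add)
  also have "\<dots> = (\<Sum>(i, a)\<in>Sigma {..n} (\<lambda>i. {1..i}). ?g a (i - a))"
    by (rule sum.Sigma) auto
  also have "\<dots> = (\<Sum>(a, r)\<in>Sigma {1..n} (\<lambda>a. {..n - a}). ?g a r)"
    by (rule sum.reindex_bij_witness[where i = "\<lambda>(a, r). (a + r, a)" and j = "\<lambda>(i, a). (a, i - a)"])
      auto
  also have "\<dots> = (\<Sum>a\<in>{1..n}. \<Sum>r\<le>n - a. ?g a r)"
    by (rule sum.Sigma[symmetric]) auto
  finally show ?thesis .
qed

lemma comp_sum_reindex_right: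
  "comp_sum n \<phi> = (\<Sum>b\<in>{1..n}. \<Sum>i\<le>n - b. \<Sum>a\<in>{1..i}. \<phi> a (i - a) b (n - b - i))"
proof -
  let ?g = "\<lambda>i b. \<Sum>a\<in>{1..i}. \<phi> a (i - a) b (n - b - i)"
  have "comp_sum n \<phi> = (\<Sum>i\<le>n. \<Sum>b\<in>{1..n - i}. ?g i b)"
    unfolding comp_sum_def by (rule sum.cong[OF refl], subst sum.swap) (simp add: add.commute)
  also have "\<dots> = (\<Sum>(i, b)\<in>Sigma {..n} (\<lambda>i. {1..n - i}). ?g i b)"
    by (rule sum.Sigma) auto
  also have "\<dots> = (\<Sum>(b, i)\<in>Sigma {1..n} (\<lambda>b. {..n - b}). ?g i b)"
    by (rule sum.reindex_bij_witness[where i = "\<lambda>(b, i). (i, b)" and j = "\<lambda>(i, b). (b, i)"]) auto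
  also have "\<dots> = (\<Sum>b\<in>{1..n}. \<Sum>i\<le>n - b. ?g i b)"
    by (rule sum.Sigma[symmetric]) auto
  finally show ?thesis .
qed

lemma comp_sum_reindex_total:
  "comp_sum n (\<lambda>a r b s. \<phi> a b r s) =
    (\<Sum>c\<in>{1..n}. \<Sum>a\<in>{1..c - 1}. \<Sum>r\<le>n - c. \<phi> a (c - a) r (n - c - r))"
proof -
  have "comp_sum n (\<lambda>a r b s. \<phi> a b r s) =
      (\<Sum>(i, a, b)\<in>Sigma {..n} (\<lambda>i. {1..i} \<times> {1..n - i}). \<phi> a b (i - a) (n - i - b))"
    unfolding comp_sum_def by (simp add: sum.Sigma sum.cartesian_product)
  also have "\<dots> = (\<Sum>(c, a, r)\<in>Sigma {1..n} (\<lambda>c. {1..c - 1} \<times> {..n - c}). \<phi> a (c - a) r (n - c - r))"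
    by (rule sum.reindex_bij_witness[where i = "\<lambda>(c, a, r). (a + r, a, c - a)"
          and j = "\<lambda>(i, a, b). (a + b, a, i - a)"])
      (auto simp: diff_diff_add add.commute)
  finally show ?thesis
    by (simp add: sum.Sigma sum.cartesian_product)
qed

lemma ser_mult_lcat_lcat:
  assumes "hbilinear P"
  shows "ser_mult P (lcat w lam k F) (lcat w' mu k G) n =
    comp_sum n (\<lambda>a r b s. hsmult (lam a * mu b) (P (pre (w (a * k)) (F r)) (pre (w' (b * k)) (G s))))"
  unfolding ser_mult_def lcat_def comp_sum_def
  by (simp add: hbilinear_simps[OF assms] hsmult_sum hsmult_mult mult.commute)
    (rule sum.cong[OF refl], rule sum.swap)

lemma lcat_ser_mult_right:
  assumes "hbilinear P"
  shows "lcat w lam k (ser_mult P F (lcat w' mu k G)) n =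
    comp_sum n (\<lambda>a r b s. hsmult (lam a * mu b) (pre (w (a * k)) (P (F r) (pre (w' (b * k)) (G s)))))"
  unfolding comp_sum_reindex_left
  by (simp add: ser_mult_def lcat_def hbilinear_simps[OF assms] hsmult_sum hsmult_mult pre_sum pre_hsmult
      add.assoc)

lemma lcat_ser_mult_left:
  assumes "hbilinear P"
  shows "lcat w' mu k (ser_mult P (lcat w lam k F) G) n =
    comp_sum n (\<lambda>a r b s. hsmult (lam a * mu b) (pre (w' (b * k)) (P (pre (w (a * k)) (F r)) (G s))))"
  unfolding comp_sum_reindex_right
  by (simp add: ser_mult_def lcat_def hbilinear_simps[OF assms] hsmult_sum hsmult_mult pre_sum pre_hsmult
      mult.commute)

lemma comp_sum_eq_lcat_conv:
  "comp_sum n (\<lambda>a r b s. hsmult (lam a * mu b) (pre (w (a * k + b * k)) (P (F r) (G s)))) =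
    lcat w (conv lam mu) k (ser_mult P F G) n"
proof -
  have "comp_sum n (\<lambda>a r b s. hsmult (lam a * mu b) (pre (w (a * k + b * k)) (P (F r) (G s)))) =
      (\<Sum>c\<in>{1..n}. \<Sum>a\<in>{1..c - 1}. \<Sum>r\<le>n - c.
         hsmult (lam a * mu (c - a)) (pre (w (c * k)) (P (F r) (G (n - c - r)))))"
    unfolding comp_sum_reindex_total
    by (intro sum.cong refl) (auto simp flip: add_mult_distrib)
  also have "\<dots> = lcat w (conv lam mu) k (ser_mult P F G) n"
    unfolding lcat_def conv_def ser_mult_def
    by (simp add: hsmult_sum_left hsmult_sum pre_sum) (rule sum.cong[OF refl], rule sum.swap)
  finally show ?thesis .
qed

lemma ser_mult_lcat_lcat_rec:
  fixes E :: "nat \<Rightarrow> nat \<Rightarrow> hpoly \<Rightarrow> hpoly \<Rightarrow> hpoly"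
  assumes P: "hbilinear P"
    and rec: "quasi_shuffle_rec P E"
    and F: "\<And>n. h1 (F n)" and G: "\<And>n. h1 (G n)" and k: "1 \<le> k"
  shows "ser_mult P (lcat z lam k F) (lcat z mu k G) n =
    lcat z lam k (ser_mult P F (lcat z mu k G)) n + lcat z mu k (ser_mult P (lcat z lam k F) G) n
    + comp_sum n (\<lambda>a r b s. hsmult (lam a * mu b) (E (a * k) (b * k) (F r) (G s)))"
proof -
  have "ser_mult P (lcat z lam k F) (lcat z mu k G) n = comp_sum n (\<lambda>a r b s.
      hsmult (lam a * mu b) (pre (z (a * k)) (P (F r) (pre (z (b * k)) (G s))))
    + hsmult (lam a * mu b) (pre (z (b * k)) (P (pre (z (a * k)) (F r)) (G s)))
    + hsmult (lam a * mu b) (E (a * k) (b * k) (F r) (G s)))"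
    unfolding ser_mult_lcat_lcat[OF P]
    by (rule comp_sum_cong, subst rec[unfolded quasi_shuffle_rec_def, rule_format])
      (use k in \<open>simp_all add: F G hsmult_add\<close>)
  then show ?thesis
    by (simp add: comp_sum_add lcat_ser_mult_right[OF P] lcat_ser_mult_left[OF P])
qed

lemma ser_mult_add_left:
    "hbilinear P \<Longrightarrow> ser_mult P (\<lambda>i. F i + F' i) G n = ser_mult P F G n + ser_mult P F' G n"
  and ser_mult_add_right:
    "hbilinear P \<Longrightarrow> ser_mult P F (\<lambda>i. G i + G' i) n = ser_mult P F G n + ser_mult P F G' n"
  and ser_mult_diff_left:
    "hbilinear P \<Longrightarrow> ser_mult P (\<lambda>i. F i - F' i) G n = ser_mult P F G n - ser_mult P F' G n"
  and ser_mult_diff_right: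
    "hbilinear P \<Longrightarrow> ser_mult P F (\<lambda>i. G i - G' i) n = ser_mult P F G n - ser_mult P F G' n"
  by (simp_all add: ser_mult_def hbilinear_simps sum.distrib sum_subtractf)

lemma ser_mult_one_left:
  assumes "hbilinear P" "P (wd []) (G n) = G n"
  shows "ser_mult P ser_one G n = G n"
proof -
  have "ser_mult P ser_one G n = (\<Sum>i\<le>n. if i = 0 then G n else 0)"
    unfolding ser_mult_def ser_one_def
    by (rule sum.cong) (simp_all add: assms hbilinear_simps)
  then show ?thesis by simp
qed

lemma ser_mult_one_right:
  assumes "hbilinear P" "P (F n) (wd []) = F n"
  shows "ser_mult P F ser_one n = F n"
proof -
  have "ser_mult P F ser_one n = (\<Sum>i\<le>n. if i = n then F n else 0)"
    unfolding ser_mult_def ser_one_def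
    by (rule sum.cong) (auto simp: assms hbilinear_simps)
  then show ?thesis by simp
qed

lemma lcat_diff: "lcat w lam k (\<lambda>m. F m - F' m) n = lcat w lam k F n - lcat w lam k F' n"
  by (simp add: lcat_def pre_diff hsmult_diff sum_subtractf)

lemma lcat_add_coeffs: "lcat w lam k F n + lcat w mu k F n = lcat w (\<lambda>c. lam c + mu c) k F n"
  by (simp add: lcat_def hsmult_add_left sum.distrib)

lemma lcat_eq_0: "(\<And>c. 1 \<le> c \<Longrightarrow> lam c = 0) \<Longrightarrow> lcat w lam k F n = 0"
  by (simp add: lcat_def)

lemma h1_ser_one: "h1 (ser_one n)"
  by (simp add: ser_one_def h1_wd h1w_def)

lemma h1_lcat_z: "1 \<le> k \<Longrightarrow> (\<And>m. m < n \<Longrightarrow> h1 (F m)) \<Longrightarrow> h1 (lcat z lam k F n)"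
  unfolding lcat_def by (intro h1_sum h1_hsmult h1_pre_z) auto

lemma h1_if_lcat_rec:
  assumes rec: "\<And>n. F n = ser_one n + lcat z lam k F n" and k: "1 \<le> k"
  shows "h1 (F n)"
proof (induction n rule: less_induct)
  case (less n)
  show ?case
    by (subst rec) (intro h1_add h1_ser_one h1_lcat_z k less)
qed

lemma ser_mult_lcat_rec:
  fixes E :: "nat \<Rightarrow> nat \<Rightarrow> hpoly \<Rightarrow> hpoly \<Rightarrow> hpoly"
  assumes P: "hbilinear P"
    and rec: "quasi_shuffle_rec P E"
    and unit_left: "\<And>g. h1 g \<Longrightarrow> P (wd []) g = g" and unit_right: "\<And>f. h1 f \<Longrightarrow> P f (wd []) = f"
    and F: "\<And>n. F n = ser_one n + lcat z lam k F n"
    and G: "\<And>n. G n = ser_one n + lcat z mu k G n" and k: "1 \<le> k"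
  shows "ser_mult P F G n = ser_one n + lcat z lam k (ser_mult P F G) n + lcat z mu k (ser_mult P F G) n
    + comp_sum n (\<lambda>a r b s. hsmult (lam a * mu b) (E (a * k) (b * k) (F r) (G s)))"
proof -
  have h1F: "h1 (F n)" and h1G: "h1 (G n)" for n
    using h1_if_lcat_rec F G k by blast+
  define A where "A = lcat z lam k F"
  define B where "B = lcat z mu k G"
  have F': "F = (\<lambda>m. ser_one m + A m)" and G': "G = (\<lambda>m. ser_one m + B m)"
    unfolding A_def B_def by (rule ext, rule F, rule ext, rule G)
  then have A: "A = (\<lambda>m. F m - ser_one m)" and B: "B = (\<lambda>m. G m - ser_one m)"
    by auto
  have h1A: "h1 (A m)" and h1B: "h1 (B m)" for m
    unfolding A B by (intro h1_diff h1F h1G h1_ser_one)+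
  have "ser_mult P F G n = ser_mult P (\<lambda>m. ser_one m + A m) (\<lambda>m. ser_one m + B m) n"
    by (simp only: F' G')
  also have "\<dots> = ser_one n + B n + A n + ser_mult P A B n"
    by (simp add: ser_mult_add_left ser_mult_add_right P ser_mult_one_left ser_mult_one_right
        unit_left unit_right h1_ser_one h1A h1B)
  also have "ser_mult P A B n = lcat z lam k (ser_mult P F B) n + lcat z mu k (ser_mult P A G) n
      + comp_sum n (\<lambda>a r b s. hsmult (lam a * mu b) (E (a * k) (b * k) (F r) (G s)))"
    unfolding A_def B_def by (rule ser_mult_lcat_lcat_rec[OF P rec h1F h1G k])
  also have "ser_mult P F B = (\<lambda>m. ser_mult P F G m - F m)"
    unfolding B by (simp add: fun_eq_iff ser_mult_diff_right P ser_mult_one_right unit_right h1F)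
  also have "ser_mult P A G = (\<lambda>m. ser_mult P F G m - G m)"
    unfolding A by (simp add: fun_eq_iff ser_mult_diff_left P ser_mult_one_left unit_left h1G)
  finally show ?thesis
    by (simp add: lcat_diff A_def[symmetric] B_def[symmetric] algebra_simps)
qed

section \<open>The series S_s(1/(1 - z_k u)) and 1/(1 + z_k u)\<close>

lemma replicate_X_append_z:
  assumes "1 \<le> k" "1 \<le> c"
  shows "replicate k X @ z (c * k) = z (Suc c * k)"
proof -
  have "k + (c * k - 1) = Suc c * k - 1"
    using assms by simp
  then show ?thesis
    by (simp add: z_def replicate_add[symmetric])
qed

lemma S_word_zpow_Suc_eq_lcat:
  assumes k: "1 \<le> k"
  shows "S_word s (zpow k (Suc m)) = lcat z (\<lambda>c. s ^ (c - 1)) k (\<lambda>m. S_word s (zpow k m)) (Suc m)"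
proof (induction m)
  case 0
  show ?case
    using S_word_zpow_Suc[OF k, of s 0]
    by (simp add: lcat_def S_word_def[of _ "[]"] zpow_def)
next
  case (Suc m)
  define F where "F = (\<lambda>m. S_word s (zpow k m))"
  define L where "L = lcat z (\<lambda>c. s ^ (c - 1)) k F"
  have "L (Suc (Suc m)) = pre (z k) (F (Suc m))
      + (\<Sum>c\<in>{Suc 1..Suc (Suc m)}. hsmult (s ^ (c - 1)) (pre (z (c * k)) (F (Suc (Suc m) - c))))"
    unfolding L_def lcat_def by (subst sum.atLeast_Suc_atMost) auto
  also have "(\<Sum>c\<in>{Suc 1..Suc (Suc m)}. hsmult (s ^ (c - 1)) (pre (z (c * k)) (F (Suc (Suc m) - c)))) =
      (\<Sum>c\<in>{1..Suc m}. hsmult (s ^ c) (pre (z (Suc c * k)) (F (Suc m - c))))"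
    by (subst sum.shift_bounds_cl_Suc_ivl) simp
  also have "\<dots> = (\<Sum>c\<in>{1..Suc m}.
      hsmult s (pre (replicate k X) (hsmult (s ^ (c - 1)) (pre (z (c * k)) (F (Suc m - c))))))"
  proof (rule sum.cong[OF refl])
    fix c
    assume "c \<in> {1..Suc m}"
    then have c: "1 \<le> c" by simp
    then have "s ^ c = s * s ^ (c - 1)"
      by (cases c) auto
    then show "hsmult (s ^ c) (pre (z (Suc c * k)) (F (Suc m - c))) =
        hsmult s (pre (replicate k X) (hsmult (s ^ (c - 1)) (pre (z (c * k)) (F (Suc m - c)))))"
      by (simp add: pre_hsmult pre_pre hsmult_mult replicate_X_append_z[OF k c])
  qed
  also have "\<dots> = hsmult s (pre (replicate k X) (L (Suc m)))"
    by (simp add: L_def lcat_def pre_sum hsmult_sum pre_add hsmult_add)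
  finally show ?case
    using S_word_zpow_Suc_Suc[OF k, of s m] Suc.IH by (simp add: F_def L_def add.commute)
qed

lemma S_word_zpow_rec:
  assumes "1 \<le> k"
  shows "S_word s (zpow k n) = ser_one n + lcat z (\<lambda>c. s ^ (c - 1)) k (\<lambda>m. S_word s (zpow k m)) n"
proof (cases n)
  case 0
  then show ?thesis
    by (simp add: S_word_def zpow_def ser_one_def lcat_def)
next
  case (Suc m)
  then show ?thesis
    by (simp only: S_word_zpow_Suc_eq_lcat[OF assms]) (simp add: ser_one_def)
qed

lemma geom_rec: "geom d k n = ser_one n + lcat z (\<lambda>c. if c = 1 then d else 0) k (geom d k) n"
proof (cases n)
  case 0
  then show ?thesis
    by (simp add: geom_def ser_one_def lcat_def wd_def)
next
  case (Suc m)
  have "lcat z (\<lambda>c. if c = 1 then d else 0) k (geom d k) n =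
      (\<Sum>c\<in>{1..n}. if c = 1 then hsmult d (pre (z k) (geom d k m)) else 0)"
    unfolding lcat_def using Suc by (intro sum.cong) auto
  also have "\<dots> = hsmult d (pre (z k) (geom d k m))"
    using Suc by simp
  finally show ?thesis
    using Suc
    by (simp add: geom_def ser_one_def pre_hsmult hsmult_mult)
qed

lemma lcat_rec_scale:
  assumes rec: "\<And>n. F n = ser_one n + lcat w lam k F n"
  shows "hsmult (d ^ n) (F n) = ser_one n + lcat w (\<lambda>c. d ^ c * lam c) k (\<lambda>m. hsmult (d ^ m) (F m)) n"
proof -
  have "hsmult (d ^ n) (lcat w lam k F n) = lcat w (\<lambda>c. d ^ c * lam c) k (\<lambda>m. hsmult (d ^ m) (F m)) n"
    unfolding lcat_def hsmult_sum
  proof (rule sum.cong[OF refl])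
    fix c
    assume "c \<in> {1..n}"
    then have "d ^ n = d ^ c * d ^ (n - c)"
      by (simp flip: power_add)
    then show "hsmult (d ^ n) (hsmult (lam c) (pre (w (c * k)) (F (n - c)))) =
        hsmult (d ^ c * lam c) (pre (w (c * k)) (hsmult (d ^ (n - c)) (F (n - c))))"
      by (simp add: pre_hsmult hsmult_mult ac_simps)
  qed
  moreover have "hsmult (d ^ n) (ser_one n) = ser_one n"
    by (simp add: ser_one_def)
  ultimately show ?thesis
    by (subst rec) (simp add: hsmult_add)
qed

lemma lookup_Nil_if_lcat_rec:
  assumes "\<And>n. F n = ser_one n + lcat z lam k F n"
  shows "Poly_Mapping.lookup (F n) [] = (if n = 0 then 1 else 0)"
  by (subst assms) (simp add: lookup_add ser_one_def lookup_wd lcat_def lookup_sum lookup_pre_Nil z_def)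

lemma S_geom: "ser_map (S s) (geom d k) n = hsmult (d ^ n) (S_word s (zpow k n))"
  by (simp add: ser_map_def geom_def S_def zpow_def hlinear_hsmult[OF hlinear_linext])

lemma S_geom_rec:
  assumes "1 \<le> k"
  shows "ser_map (S s) (geom d k) n =
    ser_one n + lcat z (\<lambda>c. d ^ c * s ^ (c - 1)) k (ser_map (S s) (geom d k)) n"
  unfolding S_geom[abs_def] by (rule lcat_rec_scale[OF S_word_zpow_rec[OF assms]])

(* lambda(u) = u/(1 - t u) and mu(u) = -u/(1 + (1-t) u) satisfy (1 + lambda)(1 + mu) = 1. *)
lemma conv_power_coeffs:
  fixes t :: "'a::comm_ring_1"
  assumes "1 \<le> c"
  shows "t ^ (c - 1) + (-1) ^ c * (1 - t) ^ (c - 1)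
    + conv (\<lambda>a. t ^ (a - 1)) (\<lambda>b. (-1) ^ b * (1 - t) ^ (b - 1)) c = 0"
proof -
  obtain m where c: "c = Suc m"
    using assms by (cases c) auto
  have sign: "(-1) ^ j * (1 - t) ^ j = (t - 1) ^ j" for j
    by (simp flip: power_mult_distrib)
  have "conv (\<lambda>a. t ^ (a - 1)) (\<lambda>b. (-1) ^ b * (1 - t) ^ (b - 1)) c =
      (\<Sum>i<m. t ^ i * ((-1) ^ Suc (m - Suc i) * (1 - t) ^ (m - Suc i)))"
    unfolding conv_def c by (simp add: sum.atLeast1_atMost_eq Suc_diff_Suc)
  also have "\<dots> = - (\<Sum>i<m. (t - 1) ^ (m - Suc i) * t ^ i)"
    by (simp add: sign sum_negf mult.commute)
  also have "\<dots> = (t - 1) ^ m - t ^ m"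
  proof -
    have "t ^ m - (t - 1) ^ m = (\<Sum>i<m. (t - 1) ^ (m - Suc i) * t ^ i)"
      using power_diff_sumr2[of t m "t - 1"] by simp
    then show ?thesis
      by (simp flip: \<open>t ^ m - (t - 1) ^ m = _\<close>)
  qed
  finally show ?thesis
    using sign[of m] c by simp
qed

lemma conv_single_right: "conv lam (\<lambda>b. if b = 1 then d else 0) c = (if 2 \<le> c then lam (c - 1) * d else 0)"
proof -
  have "conv lam (\<lambda>b. if b = 1 then d else 0) c = (\<Sum>a\<in>{1..c - 1}. if a = c - 1 then lam a * d else 0)"
    unfolding conv_def by (intro sum.cong) auto
  then show ?thesis
    by auto
qed

(* lambda(x) = x/(1 - v x) and mu(x) = -x satisfy lambda + mu + v lambda mu = 0. *)
lemma conv_single_geometric_coeffs: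
  fixes v :: "'a::comm_ring_1"
  assumes "1 \<le> c"
  shows "v ^ (c - 1) + (if c = 1 then -1 else 0) + conv (\<lambda>a. v * v ^ (a - 1)) (\<lambda>b. if b = 1 then -1 else 0) c = 0"
proof -
  obtain j where c: "c = Suc j"
    using assms by (cases c) auto
  show ?thesis
    unfolding conv_single_right c by (cases j) simp_all
qed

section \<open>The two inverse relations\<close>

lemma hprod_series_rec:
  assumes F: "\<And>n. F n = ser_one n + lcat z lam k F n"
    and G: "\<And>n. G n = ser_one n + lcat z mu k G n" and k: "1 \<le> k"
  shows "ser_mult hprod F G n = ser_one n + lcat z (\<lambda>c. lam c + mu c + conv lam mu c) k (ser_mult hprod F G) n"
  using ser_mult_lcat_rec[OF hbilinear_hprod quasi_shuffle_rec_hprod hprod_unit F G k, of n]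
  by (simp add: comp_sum_eq_lcat_conv lcat_add_coeffs add.assoc)

lemma hprod_S_geom_inverse:
  assumes k: "1 \<le> k"
  shows "ser_mult hprod (ser_map (S tvar) (geom 1 k)) (ser_map (S (1 - tvar)) (geom (-1) k)) = ser_one"
proof
  fix n
  show "ser_mult hprod (ser_map (S tvar) (geom 1 k)) (ser_map (S (1 - tvar)) (geom (-1) k)) n = ser_one n"
    by (subst hprod_series_rec[OF S_geom_rec[OF k] S_geom_rec[OF k] k], subst lcat_eq_0)
      (simp_all only: power_one mult_1_left conv_power_coeffs add_0_right)
qed

lemma ser_mult_thprod_reduced:
  assumes "\<And>n. Poly_Mapping.lookup (F n) [] = (if n = 0 then 1 else 0)"
    and "\<And>n. Poly_Mapping.lookup (G n) [] = (if n = 0 then 1 else 0)"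
  shows "ser_mult thprod_reduced F G n = ser_mult thprod F G n - ser_one n"
proof -
  have "(\<Sum>i\<le>n. hsmult (Poly_Mapping.lookup (F i) [] * Poly_Mapping.lookup (G (n - i)) []) (wd [])) =
      (\<Sum>i\<le>n. if i = 0 then ser_one n else 0)"
    by (rule sum.cong) (auto simp: assms ser_one_def)
  then show ?thesis
    by (simp add: ser_mult_def thprod_reduced_def sum_subtractf)
qed

lemma thprod_series_rec:
  assumes F: "\<And>n. F n = ser_one n + lcat z lam k F n"
    and G: "\<And>n. G n = ser_one n + lcat z mu k G n" and k: "1 \<le> k"
  shows "ser_mult thprod F G n = ser_one n
    + lcat z (\<lambda>c. lam c + mu c + conv (\<lambda>a. (1 - 2 * tvar) * lam a) mu c) k (ser_mult thprod F G) n
    + lcat (\<lambda>j. replicate j X) (conv (\<lambda>a. (tvar ^ 2 - tvar) * lam a) mu) k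
        (\<lambda>j. ser_mult thprod F G j - ser_one j) n"
proof -
  have "ser_mult thprod_reduced F G = (\<lambda>j. ser_mult thprod F G j - ser_one j)"
    by (rule ext, rule ser_mult_thprod_reduced[OF lookup_Nil_if_lcat_rec[OF F] lookup_Nil_if_lcat_rec[OF G]])
  moreover have "comp_sum n (\<lambda>a r b s. hsmult (lam a * mu b)
      (hsmult (1 - 2 * tvar) (pre (z (a * k + b * k)) (thprod (F r) (G s)))
       + hsmult (tvar ^ 2 - tvar) (pre (replicate (a * k + b * k) X) (thprod_reduced (F r) (G s))))) =
    lcat z (conv (\<lambda>a. (1 - 2 * tvar) * lam a) mu) k (ser_mult thprod F G) n
    + lcat (\<lambda>j. replicate j X) (conv (\<lambda>a. (tvar ^ 2 - tvar) * lam a) mu) k (ser_mult thprod_reduced F G) n"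
    unfolding comp_sum_eq_lcat_conv[symmetric] comp_sum_add[symmetric]
    by (rule comp_sum_cong) (simp add: hsmult_add hsmult_mult ac_simps)
  ultimately show ?thesis
    using ser_mult_lcat_rec[OF hbilinear_thprod quasi_shuffle_rec_thprod thprod_unit F G k, of n]
    by (simp add: lcat_add_coeffs ac_simps)
qed

lemma thprod_S_geom_inverse:
  assumes k: "1 \<le> k"
  shows "ser_mult thprod (ser_map (S (1 - 2 * tvar)) (geom 1 k)) (geom (-1) k) = ser_one"
proof
  fix n
  let ?H = "ser_mult thprod (ser_map (S (1 - 2 * tvar)) (geom 1 k)) (geom (-1) k)"
  have rec: "?H m = ser_one m + lcat (\<lambda>j. replicate j X)
      (conv (\<lambda>a. (tvar ^ 2 - tvar) * (1 ^ a * (1 - 2 * tvar) ^ (a - 1))) (\<lambda>c. if c = 1 then -1 else 0)) k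
      (\<lambda>j. ?H j - ser_one j) m" for m
    by (subst thprod_series_rec[OF S_geom_rec[OF k] geom_rec k], subst lcat_eq_0)
      (simp_all only: power_one mult_1_left conv_single_geometric_coeffs add_0_right)
  show "?H n = ser_one n"
  proof (induction n rule: less_induct)
    case (less n)
    then have "lcat (\<lambda>j. replicate j X) \<kappa> k (\<lambda>j. ?H j - ser_one j) n = 0" for \<kappa>
      unfolding lcat_def by (intro sum.neutral) auto
    with rec[of n] show ?case
      by simp
  qed
qed

theorem corollary4p7:
  fixes k :: nat
  assumes "k \<ge> 1"
  shows "ser_mult hprod (ser_map (S tvar) (geom 1 k)) (ser_map (S (1 - tvar)) (geom (-1) k))
           = ser_one
       \<and> ser_mult thprod (ser_map (S (1 - 2 * tvar)) (geom 1 k)) (geom (-1) k) = ser_one"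
  using hprod_S_geom_inverse[OF assms] thprod_S_geom_inverse[OF assms] by simp

end
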